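(* For all $s > 0$, $$\theta_3''(s)\theta_3(s) - \theta_3'(s)^2 > -\frac{\theta_3'(s)\theta_3(s)}{s} > 0.$$
   Context: For $s>0$, $\theta_3(s) = \sum_{k\in\mathbb{Z}} e^{-\pi k^2 s}$. *)

theory Defs
  imports "HOL-Analysis.Analysis"
begin

text \<open>Jacobi theta function theta_3(s) = sum over k in Z of exp(-pi k^2 s), for s > 0.
  (For s <= 0 the value is the library's default of infsum, irrelevant here since
  derivatives are only taken at s > 0, where they depend only on a neighbourhood.)\<close>
definition theta3 :: "real \<Rightarrow> real" where
  "theta3 s = (\<Sum>\<^sub>\<infinity>k\<in>(UNIV::int set). exp (- pi * (of_int k)^2 * s))"

end

theory Submission
  imports Defs "HOL-Probability.Characteristic_Functions"
begin

text \<open>By Poisson summation for the Gaussian, \<open>theta3 s = theta3 (1/s) / sqrt s\<close>: the periodized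
  Gaussian \<open>\<Sum>k. exp (- pi s (x + k)\<^sup>2)\<close> and its Fourier series
  \<open>(\<Sum>k. exp (- pi k\<^sup>2 / s) cos (2 pi k x)) / sqrt s\<close> are continuous even functions on
  \<open>[-1/2, 1/2]\<close> with the same cosine coefficients, hence equal, and \<open>x = 0\<close> gives the formula.
  The theorem says \<open>T > 0\<close> and \<open>theta3' < 0 < theta3\<close>, where
  \<open>T s = s (theta3'' theta3 - theta3'\<^sup>2) + theta3' theta3\<close>. Differentiating the functional
  equation twice gives \<open>T s = T (1/s) / s\<^sup>3\<close>, so it suffices to take \<open>s \<ge> 1\<close>. There
  \<open>theta3 = 1 + 2 E\<^sub>0\<close>, \<open>theta3' = - 2 pi E\<^sub>1\<close>, \<open>theta3'' = 2 pi\<^sup>2 E\<^sub>2\<close> with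
  \<open>E\<^sub>j s = \<Sum>n\<ge>1. n^(2j) exp (- pi n\<^sup>2 s)\<close>, and the crude bounds
  \<open>E\<^sub>0 \<le> 1/7\<close>, \<open>E\<^sub>1 \<le> 1/4\<close>, \<open>E\<^sub>1 \<le> E\<^sub>2\<close> already force \<open>T > 0\<close>.\<close>

section \<open>Functions satisfying the inversion equation\<close>

lemma inversion_equation_deriv:
  fixes f f' :: "real \<Rightarrow> real"
  assumes f': "\<And>y. y > 0 \<Longrightarrow> (f has_real_derivative f' y) (at y)"
    and inv: "\<And>y. y > 0 \<Longrightarrow> f y = f (1/y) / sqrt y" and x: "x > 0"
  shows "f' x = - f' (1/x) / (x^2 * sqrt x) - f (1/x) / (2 * x * sqrt x)"
proof -
  have "((\<lambda>y. f (1/y) / sqrt y) has_real_derivative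
          - f' (1/x) / (x^2 * sqrt x) - f (1/x) / (2 * x * sqrt x)) (at x)"
  proof -
    \<comment> \<open>writing \<open>x = q\<^sup>2\<close> makes the identity rational in \<open>q\<close>\<close>
    obtain q where q: "q > 0" "x = q^2" using x by (metis real_sqrt_gt_0_iff real_sqrt_pow2 less_imp_le)
    then have "sqrt x = q" by simp
    with q show ?thesis
      by (auto intro!: derivative_eq_intros DERIV_chain2[OF f'])
        (simp add: field_simps power2_eq_square)
  qed
  then have "(f has_real_derivative
          - f' (1/x) / (x^2 * sqrt x) - f (1/x) / (2 * x * sqrt x)) (at x)"
  proof (rule has_field_derivative_transform_within_open[of _ _ _ "{0<..}"])
    show "f (1/y) / sqrt y = f y" if "y \<in> {0<..}" for y
      using inv[of y] that by simp
  qed (use x in auto)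
  with f'[OF x] show ?thesis
    by (rule DERIV_unique)
qed

lemma inversion_equation_deriv2:
  fixes f f' f'' :: "real \<Rightarrow> real"
  assumes f': "\<And>y. y > 0 \<Longrightarrow> (f has_real_derivative f' y) (at y)"
    and f'': "\<And>y. y > 0 \<Longrightarrow> (f' has_real_derivative f'' y) (at y)"
    and inv: "\<And>y. y > 0 \<Longrightarrow> f y = f (1/y) / sqrt y" and x: "x > 0"
  shows "f'' x = f'' (1/x) / (x^4 * sqrt x) + 3 * f' (1/x) / (x^3 * sqrt x)
                  + 3 * f (1/x) / (4 * x^2 * sqrt x)"
proof -
  have "((\<lambda>y. - f' (1/y) / (y^2 * sqrt y) - f (1/y) / (2 * y * sqrt y)) has_real_derivative
          f'' (1/x) / (x^4 * sqrt x) + 3 * f' (1/x) / (x^3 * sqrt x) + 3 * f (1/x) / (4 * x^2 * sqrt x)) (at x)"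
  proof -
    obtain q where q: "q > 0" "x = q^2" using x by (metis real_sqrt_gt_0_iff real_sqrt_pow2 less_imp_le)
    then have "sqrt x = q" by simp
    with q show ?thesis
      by (auto intro!: derivative_eq_intros DERIV_chain2[OF f'] DERIV_chain2[OF f''])
        (simp add: field_simps power_numeral_reduce)
  qed
  then have "(f' has_real_derivative
          f'' (1/x) / (x^4 * sqrt x) + 3 * f' (1/x) / (x^3 * sqrt x) + 3 * f (1/x) / (4 * x^2 * sqrt x)) (at x)"
  proof (rule has_field_derivative_transform_within_open[of _ _ _ "{0<..}"])
    show "- f' (1/y) / (y^2 * sqrt y) - f (1/y) / (2 * y * sqrt y) = f' y" if "y \<in> {0<..}" for y
      using inversion_equation_deriv[OF f' inv, of y] that by simp
  qed (use x in auto)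
  with f''[OF x] show ?thesis
    by (rule DERIV_unique)
qed

text \<open>\<open>x * loglog_convexity f x / f x\<^sup>2\<close> is the second derivative of \<open>t \<mapsto> ln (f (exp t))\<close>
  at \<open>t = ln x\<close>.\<close>
definition loglog_convexity :: "(real \<Rightarrow> real) \<Rightarrow> real \<Rightarrow> real" where
  "loglog_convexity f x = x * (deriv (deriv f) x * f x - (deriv f x)^2) + deriv f x * f x"

lemma loglog_convexity_inversion:
  fixes f :: "real \<Rightarrow> real"
  assumes f': "\<And>y. y > 0 \<Longrightarrow> (f has_real_derivative deriv f y) (at y)"
    and f'': "\<And>y. y > 0 \<Longrightarrow> (deriv f has_real_derivative deriv (deriv f) y) (at y)"
    and inv: "\<And>y. y > 0 \<Longrightarrow> f y = f (1/y) / sqrt y" and x: "x > 0"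
  shows "loglog_convexity f x = loglog_convexity f (1/x) / x^3"
proof -
  obtain q where q: "q > 0" "x = q^2" using x by (metis real_sqrt_gt_0_iff real_sqrt_pow2 less_imp_le)
  then have sq: "sqrt x = q" by simp
  define a b c where "a = f (1/x)" and "b = deriv f (1/x)" and "c = deriv (deriv f) (1/x)"
  have e0: "f x = a / q"
    using inv[OF x] by (simp add: a_def sq)
  have e1: "deriv f x = - b / (x^2 * q) - a / (2 * x * q)"
    using inversion_equation_deriv[OF f' inv x] by (simp add: a_def b_def sq)
  have e2: "deriv (deriv f) x = c / (x^4 * q) + 3 * b / (x^3 * q) + 3 * a / (4 * x^2 * q)"
    using inversion_equation_deriv2[OF f' f'' inv x] by (simp add: a_def b_def c_def sq)
  have e3: "loglog_convexity f (1/x) = (c * a - b^2) / x + b * a"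
    by (simp add: loglog_convexity_def a_def b_def c_def)
  show ?thesis
    unfolding loglog_convexity_def[of f x] e0 e1 e2 e3
    using q by (simp add: field_simps power_numeral_reduce)
qed

section \<open>Moment series of \<open>theta3\<close>\<close>

definition theta_moment_term :: "nat \<Rightarrow> real \<Rightarrow> nat \<Rightarrow> real" where
  "theta_moment_term j x n = real (Suc n) ^ (2*j) * exp (- pi * real (Suc n)^2 * x)"

definition theta_moment :: "nat \<Rightarrow> real \<Rightarrow> real" where
  "theta_moment j x = (\<Sum>n. theta_moment_term j x n)"

lemma power_mult_exp_neg_square_le:
  fixes c m :: real
  assumes c: "c > 0"
  shows "m^(2*j) * exp (- c * m^2) \<le> (2*j/c)^j * exp (- c * m^2 / 2)"
proof (cases "j = 0")
  case True
  then show ?thesis using c by simp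
next
  case False
  define u where "u = c * m^2 / (2*j)"
  have u0: "u \<ge> 0" using c by (simp add: u_def)
  have m2: "m^2 = 2*j*u/c" using c False by (simp add: u_def field_simps)
  have "u \<le> exp u"
    using exp_ge_add_one_self[of u] by linarith
  then have ue: "u * exp (-u) \<le> 1"
    by (simp add: exp_minus field_simps)
  have "m^(2*j) * exp (- c * m^2) = (2*j/c)^j * (u * exp (-u))^j * exp (- c * m^2 / 2)"
  proof -
    have "m^(2*j) = (m^2)^j"
      by (simp add: power_mult)
    also have "\<dots> = (2*j/c)^j * u^j"
      by (simp add: m2 power_mult_distrib[symmetric] mult.commute)
    finally have "m^(2*j) = (2*j/c)^j * u^j" .
    moreover have "exp (- c * m^2) = exp (-u)^j * exp (- c * m^2 / 2)"
      using c False by (simp add: exp_of_nat_mult[symmetric] exp_add[symmetric] m2 field_simps)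
    ultimately show ?thesis by (simp add: power_mult_distrib)
  qed
  also have "\<dots> \<le> (2*j/c)^j * 1 * exp (- c * m^2 / 2)"
    using ue u0 c by (intro mult_right_mono mult_left_mono power_le_one) auto
  finally show ?thesis by simp
qed

lemma theta_moment_term_le:
  assumes a: "a > 0" and y: "y \<ge> a"
  shows "theta_moment_term j y n \<le> (2 * real j/(pi*a))^j * exp (- pi * a / 2) ^ Suc n"
proof -
  let ?m = "real (Suc n)"
  have "theta_moment_term j y n \<le> ?m^(2*j) * exp (- (pi*a) * ?m^2)"
    unfolding theta_moment_term_def using a y by (auto intro!: mult_left_mono)
  also have "\<dots> \<le> (2 * real j/(pi*a))^j * exp (- (pi*a) * ?m^2 / 2)"
    using a by (intro power_mult_exp_neg_square_le) simp
  also have "\<dots> \<le> (2 * real j/(pi*a))^j * exp (- pi * a / 2) ^ Suc n"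
  proof -
    have "?m \<le> ?m^2" by (simp add: power2_eq_square)
    then have "pi*a*?m \<le> pi*a*?m^2" using a by (intro mult_left_mono) auto
    then have "exp (- (pi*a) * ?m^2 / 2) \<le> exp (?m * (- pi * a / 2))"
      by (simp add: algebra_simps)
    also have "\<dots> = exp (- pi * a / 2) ^ Suc n"
      by (rule exp_of_nat_mult)
    finally have "exp (- (pi*a) * ?m^2 / 2) \<le> exp (- pi * a / 2) ^ Suc n" .
    then show ?thesis using a by (intro mult_left_mono) auto
  qed
  finally show ?thesis .
qed

lemma summable_theta_moment_term:
  assumes "y > 0"
  shows "summable (theta_moment_term j y)"
proof (rule summable_comparison_test')
  show "summable (\<lambda>n. (2 * real j/(pi*y))^j * exp (- pi * y / 2) ^ Suc n)"
    using assms by (intro summable_mult summable_Suc_iff[THEN iffD2] summable_geometric) auto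
  show "norm (theta_moment_term j y n) \<le> (2 * real j/(pi*y))^j * exp (- pi * y / 2) ^ Suc n" for n
    using assms theta_moment_term_le[of y y j n] by (simp add: theta_moment_term_def)
qed

lemma theta_moment_term_nonneg: "theta_moment_term j x n \<ge> 0"
  by (simp add: theta_moment_term_def)

lemma theta_moment_term_has_real_derivative:
  "((\<lambda>x. theta_moment_term j x n) has_real_derivative - pi * theta_moment_term (Suc j) y n) (at y within S)"
  unfolding theta_moment_term_def
  by (auto intro!: derivative_eq_intros simp: power_add power2_eq_square algebra_simps)

lemma theta_moment_has_real_derivative:
  assumes y: "y > 0"
  shows "(theta_moment j has_real_derivative - pi * theta_moment (Suc j) y) (at y)"
proof -
  let ?S = "{y/2..}"
  have "((\<lambda>x. \<Sum>n. theta_moment_term j x n) has_real_derivative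
          (\<Sum>n. - pi * theta_moment_term (Suc j) y n)) (at y)"
  proof (rule has_field_derivative_series'(2))
    show "uniformly_convergent_on ?S (\<lambda>n x. \<Sum>i<n. - pi * theta_moment_term (Suc j) x i)"
    proof (rule Weierstrass_m_test')
      define B where "B n = (2*real (Suc j)/(pi*(y/2)))^Suc j * exp (- pi * (y/2) / 2) ^ Suc n" for n
      show "summable (\<lambda>n. pi * B n)"
        unfolding B_def using y
        by (intro summable_mult summable_Suc_iff[THEN iffD2] summable_geometric) auto
      show "norm (- pi * theta_moment_term (Suc j) x n) \<le> pi * B n" if "x \<in> ?S" for n x
      proof -
        have "theta_moment_term (Suc j) x n \<le> B n"
          unfolding B_def using that y by (intro theta_moment_term_le) auto
        then show ?thesis by (simp add: abs_mult theta_moment_term_nonneg)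
      qed
    qed
  qed (use y summable_theta_moment_term theta_moment_term_has_real_derivative in auto)
  moreover have "(\<Sum>n. - pi * theta_moment_term (Suc j) y n) = - pi * theta_moment (Suc j) y"
    unfolding theta_moment_def using summable_theta_moment_term[OF y] by (rule suminf_mult)
  ultimately show ?thesis unfolding theta_moment_def[abs_def] by simp
qed

lemma theta3_eq_theta_moment:
  assumes x: "x > 0"
  shows "theta3 x = 1 + 2 * theta_moment 0 x"
proof -
  let ?f = "\<lambda>k::int. exp (- pi * (of_int k)^2 * x)"
  let ?pos = "range (\<lambda>n. int (Suc n))" and ?neg = "range (\<lambda>n. - int (Suc n))"
  have hs: "(theta_moment_term 0 x has_sum theta_moment 0 x) UNIV"
    unfolding theta_moment_def using summable_theta_moment_term[OF x, of 0]
    by (intro sums_nonneg_imp_has_sum) (auto simp: summable_sums theta_moment_term_def)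
  have "(?f has_sum theta_moment 0 x) ?pos"
    by (subst has_sum_reindex) (auto simp: inj_on_def o_def theta_moment_term_def intro: has_sum_cong[THEN iffD1, OF _ hs])
  moreover have "(?f has_sum theta_moment 0 x) ?neg"
  proof (subst has_sum_reindex)
    have "?f \<circ> (\<lambda>n. - int (Suc n)) = theta_moment_term 0 x"
      by (auto simp: fun_eq_iff theta_moment_term_def power2_eq_square algebra_simps)
    then show "((?f \<circ> (\<lambda>n. - int (Suc n))) has_sum theta_moment 0 x) UNIV" using hs by simp
  qed (auto simp: inj_on_def)
  moreover have "(?f has_sum 1) {0}"
    by (rule has_sum_finiteI) auto
  ultimately have "(?f has_sum (1 + (theta_moment 0 x + theta_moment 0 x))) ({0} \<union> (?pos \<union> ?neg))"
    by (intro has_sum_Un_disjoint) auto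
  moreover have "{0} \<union> (?pos \<union> ?neg) = UNIV"
  proof -
    have "k \<in> {0} \<union> (?pos \<union> ?neg)" for k :: int
    proof (cases "k > 0")
      case True
      then show ?thesis by (auto intro!: image_eqI[of _ _ "nat k - 1"])
    next
      case False
      then show ?thesis by (cases "k = 0") (auto intro!: image_eqI[of _ _ "nat (-k) - 1"])
    qed
    then show ?thesis by auto
  qed
  ultimately show ?thesis unfolding theta3_def by (simp add: infsumI)
qed

lemma theta3_has_real_derivative:
  assumes x: "x > 0"
  shows "(theta3 has_real_derivative - 2 * pi * theta_moment 1 x) (at x)"
proof -
  have "((\<lambda>x. 1 + 2 * theta_moment 0 x) has_real_derivative - 2 * pi * theta_moment 1 x) (at x)"
    using x by (auto intro!: derivative_eq_intros theta_moment_has_real_derivative)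
  then show ?thesis
    by (rule has_field_derivative_transform_within_open[of _ _ _ "{0<..}"])
      (use x theta3_eq_theta_moment in auto)
qed

lemma deriv_theta3: "x > 0 \<Longrightarrow> deriv theta3 x = - 2 * pi * theta_moment 1 x"
  by (rule DERIV_imp_deriv[OF theta3_has_real_derivative])

lemma deriv_theta3_has_real_derivative:
  assumes x: "x > 0"
  shows "(deriv theta3 has_real_derivative 2 * pi^2 * theta_moment 2 x) (at x)"
proof -
  have "((\<lambda>x. - 2 * pi * theta_moment 1 x) has_real_derivative 2 * pi^2 * theta_moment 2 x) (at x)"
    using x by (auto intro!: derivative_eq_intros theta_moment_has_real_derivative
        simp: power2_eq_square numeral_2_eq_2)
  then show ?thesis
    by (rule has_field_derivative_transform_within_open[of _ _ _ "{0<..}"])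
      (use x deriv_theta3 in auto)
qed

lemma deriv2_theta3: "x > 0 \<Longrightarrow> deriv (deriv theta3) x = 2 * pi^2 * theta_moment 2 x"
  by (rule DERIV_imp_deriv[OF deriv_theta3_has_real_derivative])

section \<open>Uniqueness of cosine coefficients\<close>

abbreviation cell :: "real set" where "cell \<equiv> {-(1/2)..1/2}"

lemma integral_mult_cos_power_cos_eq_0:
  fixes H :: "real \<Rightarrow> real" and j :: int
  assumes cH: "continuous_on cell H"
    and z: "\<And>m::nat. integral cell (\<lambda>x. H x * cos (2*pi*m*x)) = 0"
  shows "integral cell (\<lambda>x. H x * (cos (2*pi*x)^k * cos (2*pi*j*x))) = 0"
proof (induction k arbitrary: j)
  case 0
  have "cos (2*pi*j*x) = cos (2*pi*nat \<bar>j\<bar>*x)" for x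
    by (cases "j \<ge> 0") (simp_all add: minus_mult_left[symmetric] del: minus_mult_left)
  then show ?case
    using z[of "nat \<bar>j\<bar>"] by simp
next
  case (Suc k)
  let ?g = "\<lambda>j x. H x * (cos (2*pi*x)^k * cos (2*pi*j*x))"
  have "H x * (cos (2*pi*x)^Suc k * cos (2*pi*j*x)) = ?g (1 - j) x / 2 + ?g (1 + j) x / 2" for x
  proof -
    have "H x * (cos (2*pi*x)^Suc k * cos (2*pi*j*x))
        = H x * cos (2*pi*x)^k * (cos (2*pi*x) * cos (2*pi*j*x))"
      by (simp add: algebra_simps)
    also have "cos (2*pi*x) * cos (2*pi*j*x) = (cos (2*pi*(1 - j)*x) + cos (2*pi*(1 + j)*x)) / 2"
      by (subst cos_times_cos) (simp add: algebra_simps)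
    finally show ?thesis
      by (simp only: algebra_simps add_divide_distrib)
  qed
  moreover have "?g i integrable_on cell" for i
    by (intro integrable_continuous_interval continuous_intros cH)
  ultimately show ?case
    using Suc.IH[of "1 - j"] Suc.IH[of "1 + j"] by (simp add: integral_add integral_divide)
qed

lemma integral_mult_cos_polynomial_eq_0:
  fixes H :: "real \<Rightarrow> real"
  assumes cH: "continuous_on cell H"
    and z: "\<And>m::nat. integral cell (\<lambda>x. H x * cos (2*pi*m*x)) = 0"
  shows "integral cell (\<lambda>x. H x * (\<Sum>i\<le>n. a i * cos (2*pi*x)^i)) = 0"
proof -
  have "integral cell (\<lambda>x. H x * (\<Sum>i\<le>n. a i * cos (2*pi*x)^i)) =
        (\<Sum>i\<le>n. a i * integral cell (\<lambda>x. H x * (cos (2*pi*x)^i * cos (2*pi*(of_int 0)*x))))"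
    by (simp add: sum_distrib_left algebra_simps integral_sum integrable_continuous_interval
        continuous_intros cH flip: integral_mult_right)
  also have "\<dots> = 0"
    using integral_mult_cos_power_cos_eq_0[OF cH z, of _ 0] by simp
  finally show ?thesis .
qed

lemma even_continuous_on_cell_factor_cos:
  fixes H :: "real \<Rightarrow> real"
  assumes cH: "continuous_on cell H" and even: "\<And>x. x \<in> cell \<Longrightarrow> H (-x) = H x"
  obtains h where "continuous_on {-1..1} h" and "\<And>x. x \<in> cell \<Longrightarrow> h (cos (2*pi*x)) = H x"
proof
  let ?h = "\<lambda>y. H (arccos y / (2*pi))"
  show "continuous_on {-1..1} ?h"
  proof (rule continuous_on_compose2[OF cH])
    show "continuous_on {-1..1} (\<lambda>y. arccos y / (2*pi))"
      by (intro continuous_intros continuous_on_arccos') auto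
    have "0 \<le> arccos y \<and> arccos y \<le> pi" if "y \<in> {-1..1}" for y
      using that by (auto intro: arccos_lbound arccos_ubound)
    then show "(\<lambda>y. arccos y / (2*pi)) ` {-1..1} \<subseteq> cell"
      by (force simp: field_simps)
  qed
  show "?h (cos (2*pi*x)) = H x" if x: "x \<in> cell" for x
  proof -
    have "\<bar>2*pi*x\<bar> \<le> pi"
      using x by (auto simp: abs_mult abs_le_iff field_simps)
    then have "?h (cos (2*pi*x)) = H \<bar>x\<bar>"
      by (simp add: arccos_cos_eq_abs abs_mult)
    also have "\<dots> = H x"
      using even[OF x] by (cases "x \<ge> 0") auto
    finally show ?thesis .
  qed
qed

text \<open>The cosine coefficients of an even function are its full Fourier coefficients; after the
  substitution \<open>y = cos (2 pi x)\<close>, Weierstrass approximation shows that they determine it.\<close>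
lemma cos_coefficients_zero_imp_zero:
  fixes H :: "real \<Rightarrow> real"
  assumes cH: "continuous_on cell H"
    and even: "\<And>x. x \<in> cell \<Longrightarrow> H (-x) = H x"
    and z: "\<And>m::nat. integral cell (\<lambda>x. H x * cos (2*pi*m*x)) = 0"
    and x: "x \<in> cell"
  shows "H x = 0"
proof -
  obtain h where ch: "continuous_on {-1..1} h" and hc: "\<And>x. x \<in> cell \<Longrightarrow> h (cos (2*pi*x)) = H x"
    using even_continuous_on_cell_factor_cos[OF cH even] by blast
  obtain B where B: "B > 0" "\<And>x. x \<in> cell \<Longrightarrow> \<bar>H x\<bar> \<le> B"
  proof -
    have "bounded (H ` cell)"
      by (rule compact_imp_bounded[OF compact_continuous_image[OF cH]]) simp
    then obtain B0 where "\<And>x. x \<in> cell \<Longrightarrow> norm (H x) \<le> B0"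
      unfolding bounded_iff by blast
    then show ?thesis by (intro that[of "\<bar>B0\<bar> + 1"]) force+
  qed
  define J where "J = integral cell (\<lambda>x. H x * H x)"
  have J_le: "\<bar>J\<bar> \<le> B * e" if e: "e > 0" for e
  proof -
    obtain g where g: "real_polynomial_function g" "\<And>y. y \<in> {-1..1} \<Longrightarrow> \<bar>h y - g y\<bar> < e"
      using Stone_Weierstrass_real_polynomial_function[OF _ ch e] by auto
    then obtain a n where gs: "g = (\<lambda>y. \<Sum>i\<le>n. a i * y^i)"
      by (auto simp: real_polynomial_function_iff_sum)
    have cg: "continuous_on cell (\<lambda>x. g (cos (2*pi*x)))"
      unfolding gs by (intro continuous_intros)
    have "J = integral cell (\<lambda>x. H x * (H x - g (cos (2*pi*x))) + H x * g (cos (2*pi*x)))"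
      unfolding J_def by (simp add: algebra_simps)
    also have "\<dots> = integral cell (\<lambda>x. H x * (H x - g (cos (2*pi*x))))
                    + integral cell (\<lambda>x. H x * g (cos (2*pi*x)))"
      by (intro integral_add integrable_continuous_interval continuous_intros cH cg)
    also have "integral cell (\<lambda>x. H x * g (cos (2*pi*x))) = 0"
      unfolding gs by (rule integral_mult_cos_polynomial_eq_0[OF cH z])
    finally have "J = integral cell (\<lambda>x. H x * (H x - g (cos (2*pi*x))))"
      by simp
    also have "norm \<dots> \<le> (B * e) * (1/2 - (-(1/2)))"
    proof (rule integral_bound)
      show "continuous_on cell (\<lambda>x. H x * (H x - g (cos (2*pi*x))))"
        by (intro continuous_intros cH cg)
      show "norm (H x * (H x - g (cos (2*pi*x)))) \<le> B * e" if x: "x \<in> cell" for x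
      proof -
        have "\<bar>H x - g (cos (2*pi*x))\<bar> \<le> e"
          using g(2)[of "cos (2*pi*x)"] hc[OF x] by auto
        then show ?thesis
          using B(2)[OF x] e by (auto simp: abs_mult intro!: mult_mono)
      qed
    qed simp
    finally show ?thesis by simp
  qed
  have "\<bar>J\<bar> \<le> 0 + e" if "e > 0" for e
    using J_le[of "e / B"] that B by simp
  then have "J = 0"
    using field_le_epsilon[of "\<bar>J\<bar>" 0] by simp
  moreover have "((\<lambda>x. H x * H x) has_integral J) (cbox (-(1/2)) (1/2))"
    unfolding J_def cbox_interval by (intro integrable_integral integrable_continuous_interval continuous_intros cH)
  ultimately have "H x * H x = 0"
    using x by (intro has_integral_0_cbox_imp_0[of "-(1/2)" "1/2"])
      (auto intro: continuous_on_mult cH simp: cbox_interval)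
  then show ?thesis by simp
qed

lemma has_integral_cos_int:
  fixes j :: int
  shows "((\<lambda>x. cos (2*pi*j*x)) has_integral (if j = 0 then 1 else 0)) cell"
proof (cases "j = 0")
  case True
  then show ?thesis using has_integral_const_real[of "1::real" "-(1/2)" "1/2"] by simp
next
  case False
  let ?f = "\<lambda>x. sin (2*pi*j*x) / (2*pi*j)"
  have "((\<lambda>x. cos (2*pi*j*x)) has_integral (?f (1/2) - ?f (-(1/2)))) cell"
  proof (rule fundamental_theorem_of_calculus)
    show "(?f has_vector_derivative cos (2*pi*j*x)) (at x within cell)" for x
      using False unfolding has_real_derivative_iff_has_vector_derivative[symmetric]
      by (auto intro!: derivative_eq_intros)
  qed simp
  moreover have "sin (2*pi*j*(1/2)) = 0" "sin (2*pi*j*(-(1/2))) = 0"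
    using sin_times_pi_eq_0[of "of_int j"] by (simp_all add: algebra_simps)
  ultimately show ?thesis
    using False by simp
qed

lemma has_integral_cos_mult_cos:
  fixes n m :: nat
  shows "((\<lambda>x. cos (2*pi*n*x) * cos (2*pi*m*x)) has_integral
          (if n = m then (if m = 0 then 1 else 1/2) else 0)) cell"
proof -
  have "cos (2*pi*n*x) * cos (2*pi*m*x) =
     (1/2) * cos (2*pi*(int n - int m)*x) + (1/2) * cos (2*pi*(int n + int m)*x)" for x
    by (subst cos_times_cos) (simp add: algebra_simps add_divide_distrib)
  moreover have "((\<lambda>x. (1/2) * cos (2*pi*(int n - int m)*x) + (1/2) * cos (2*pi*(int n + int m)*x))
      has_integral ((1/2) * (if int n - int m = 0 then 1 else 0) + (1/2) * (if int n + int m = 0 then 1 else 0))) cell"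
    by (intro has_integral_add has_integral_cmult_real has_integral_cos_int[unfolded of_int_of_nat_eq])
  moreover have "(1/2) * (if int n - int m = 0 then 1 else 0) + (1/2) * (if int n + int m = 0 then 1 else 0)
      = (if n = m then (if m = 0 then 1 else 1/2) else (0::real))"
    by auto
  ultimately show ?thesis
    by simp
qed

lemma has_integral_suminf:
  fixes f :: "nat \<Rightarrow> real \<Rightarrow> real"
  assumes cont: "\<And>n. continuous_on {a..b} (f n)"
    and bound: "\<And>n x. x \<in> {a..b} \<Longrightarrow> norm (f n x) \<le> M n" and M: "summable M"
    and ci: "\<And>n. (f n has_integral c n) {a..b}"
    and L: "(\<lambda>N. \<Sum>n<N. c n) \<longlonglongrightarrow> L"
  shows "((\<lambda>x. \<Sum>n. f n x) has_integral L) {a..b}"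
proof -
  have "uniform_limit {a..b} (\<lambda>N x. \<Sum>n<N. f n x) (\<lambda>x. \<Sum>n. f n x) sequentially"
    by (rule Weierstrass_m_test) (use bound M in auto)
  then obtain I J where I: "\<And>N. ((\<lambda>x. \<Sum>n<N. f n x) has_integral I N) {a..b}"
    and J: "((\<lambda>x. \<Sum>n. f n x) has_integral J) {a..b}" and IJ: "I \<longlonglongrightarrow> J"
    by (rule uniform_limit_integral) (auto intro: continuous_on_sum cont)
  have "((\<lambda>x. \<Sum>n<N. f n x) has_integral (\<Sum>n<N. c n)) {a..b}" for N
    by (intro has_integral_sum ci) auto
  then have "I = (\<lambda>N. \<Sum>n<N. c n)"
    using I has_integral_unique by blast
  with IJ L have "J = L"
    using LIMSEQ_unique by auto
  with J show ?thesis by simp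
qed

section \<open>Poisson summation for the Gaussian\<close>

lemma std_normal_density_cos_integral:
  "integrable lborel (\<lambda>x. std_normal_density x * cos (w * x)) \<and>
   (\<integral>x. std_normal_density x * cos (w * x) \<partial>lborel) = exp (- (w^2) / 2)"
proof -
  have meas: "(\<lambda>x. iexp (w * x)) \<in> borel_measurable lborel"
    by measurable
  have intc: "integrable lborel (\<lambda>x. std_normal_density x *\<^sub>R iexp (w * x))"
    by (rule Bochner_Integration.integrable_bound[of _ "std_normal_density"]) (auto simp: norm_mult)
  have "char std_normal_distribution w = (\<integral>x. std_normal_density x *\<^sub>R iexp (w * x) \<partial>lborel)"
    unfolding char_def by (subst integral_density) (auto simp: meas)
  then have char: "(\<integral>x. std_normal_density x *\<^sub>R iexp (w * x) \<partial>lborel) = exp (- (w^2) / 2)"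
    using char_std_normal_distribution by simp
  have int: "integrable lborel (\<lambda>x. std_normal_density x * cos (w * x))"
    by (rule Bochner_Integration.integrable_bound[of _ "std_normal_density"])
      (auto simp: abs_mult intro!: AE_I2 mult_left_le)
  have "(\<integral>x. std_normal_density x * cos (w * x) \<partial>lborel)
      = (\<integral>x. Re (std_normal_density x *\<^sub>R iexp (w * x)) \<partial>lborel)"
    by (simp add: cos_exp_eq Re_exp)
  also have "\<dots> = Re (\<integral>x. std_normal_density x *\<^sub>R iexp (w * x) \<partial>lborel)"
    using intc by (rule integral_Re)
  also have "\<dots> = exp (- (w^2) / 2)"
    using char by simp
  finally show ?thesis
    using int by simp
qed

lemma gaussian_cos_integral:
  fixes s m :: real
  assumes s: "s > 0"
  shows "integrable lborel (\<lambda>x. exp (- pi * s * x^2) * cos (2 * pi * m * x)) \<and>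
         (\<integral>x. exp (- pi * s * x^2) * cos (2 * pi * m * x) \<partial>lborel) = exp (- pi * m^2 / s) / sqrt s"
proof -
  define f where "f x = exp (- pi * s * x^2) * cos (2 * pi * m * x)" for x
  define c where "c = 1 / sqrt (2 * pi * s)"
  define w where "w = 2 * pi * m * c"
  have c: "c > 0"
    using s by (simp add: c_def)
  have c2: "c^2 = 1 / (2 * pi * s)"
    using s by (simp add: c_def power_divide)
  have fc: "f (0 + c * x) = sqrt (2 * pi) * (std_normal_density x * cos (w * x))" for x
  proof -
    have "pi * s * (c * x)^2 = x^2 / 2"
      using s by (simp add: power_mult_distrib c2)
    moreover have "sqrt (2 * pi) * std_normal_density x = exp (- (x^2) / 2)"
      by (simp add: normal_density_def)
    ultimately show ?thesis
      unfolding f_def w_def by (simp add: algebra_simps)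
  qed
  note std = std_normal_density_cos_integral[of w]
  have int: "integrable lborel f"
    using std lborel_integrable_real_affine_iff[of c f 0] c unfolding fc by simp
  have "(\<integral>x. f x \<partial>lborel) = \<bar>c\<bar> *\<^sub>R (\<integral>x. f (0 + c * x) \<partial>lborel)"
    by (rule lborel_integral_real_affine) (use c in simp)
  also have "\<dots> = c * sqrt (2 * pi) * exp (- (w^2) / 2)"
    unfolding fc using c std by simp
  also have "\<dots> = exp (- pi * m^2 / s) / sqrt s"
  proof -
    have "c * sqrt (2 * pi) = 1 / sqrt s"
      using s by (simp add: c_def real_sqrt_mult)
    moreover have "- (w^2) / 2 = - pi * m^2 / s"
      unfolding w_def power_mult_distrib c2 using s by (simp add: field_simps power2_eq_square)
    ultimately show ?thesis by simp
  qed
  finally show ?thesis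
    using int unfolding f_def by simp
qed

lemma tendsto_integral_symmetric:
  fixes f :: "real \<Rightarrow> real"
  assumes f: "integrable lborel f"
  shows "(\<lambda>N. integral {-(real N + 1/2)..real N + 1/2} f) \<longlonglongrightarrow> (\<integral>x. f x \<partial>lborel)"
proof -
  let ?I = "\<lambda>N::nat. {-(real N + 1/2)..real N + 1/2}"
  have "integral (?I N) f = (\<integral>x. indicator (?I N) x *\<^sub>R f x \<partial>lborel)" for N
  proof -
    have "set_integrable lborel (?I N) f"
      unfolding set_integrable_def by (rule integrable_mult_indicator) (auto intro: f)
    then show ?thesis
      using set_borel_integral_eq_integral(2) by (metis set_lebesgue_integral_def)
  qed
  moreover have "(\<lambda>N. \<integral>x. indicator (?I N) x *\<^sub>R f x \<partial>lborel) \<longlonglongrightarrow> (\<integral>x. f x \<partial>lborel)"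
  proof (rule integral_dominated_convergence[where w="\<lambda>x. norm (f x)"])
    show "AE x in lborel. (\<lambda>N. indicator (?I N) x *\<^sub>R f x) \<longlonglongrightarrow> f x"
    proof (rule AE_I2)
      fix x :: real
      obtain N0 :: nat where "\<bar>x\<bar> \<le> real N0"
        using real_arch_simple by blast
      then have "\<forall>N\<ge>N0. indicator (?I N) x *\<^sub>R f x = f x"
        by (auto simp: indicator_def abs_le_iff)
      then show "(\<lambda>N. indicator (?I N) x *\<^sub>R f x) \<longlonglongrightarrow> f x"
        by (intro tendsto_eventually) (auto simp: eventually_sequentially)
    qed
  qed (use f in \<open>auto intro!: AE_I2 borel_measurable_integrable integrable_mult_indicator
      simp: indicator_def\<close>)
  ultimately show ?thesis
    by simp
qed

lemma integral_cell_shift_mult_cos: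
  fixes f :: "real \<Rightarrow> real" and k :: int and m :: nat
  shows "integral cell (\<lambda>x. f (x + k) * cos (2 * pi * m * x))
       = integral {k - 1/2..k + 1/2} (\<lambda>y. f y * cos (2 * pi * m * y))"
proof -
  have "cos (2 * pi * m * (x + k)) = cos (2 * pi * m * x)" for x :: real
  proof -
    have "cos (2 * pi * m * (x + k)) = cos (2 * pi * m * x + 2 * pi * of_int (int m * k))"
      by (simp add: algebra_simps)
    also have "\<dots> = cos (2 * pi * m * x)"
      unfolding cos_add using cos_int_2pin[of "int m * k"] sin_int_2pin[of "int m * k"] by simp
    finally show ?thesis .
  qed
  then show ?thesis
    using integral_shift_real_ivl[of "k - 1/2" k "k + 1/2" "\<lambda>y. f y * cos (2 * pi * m * y)"] by simp
qed

definition gauss :: "real \<Rightarrow> real \<Rightarrow> real" where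
  "gauss s x = exp (- pi * s * x^2)"

definition gauss_cos :: "real \<Rightarrow> nat \<Rightarrow> real \<Rightarrow> real" where
  "gauss_cos s m y = gauss s y * cos (2 * pi * m * y)"

definition gauss_pair :: "real \<Rightarrow> nat \<Rightarrow> real \<Rightarrow> real" where
  "gauss_pair s n x = gauss s (x + Suc n) + gauss s (x - Suc n)"

text \<open>\<open>periodized_gauss s x = (\<Sum>k\<in>\<int>. gauss s (x + k))\<close>, summed symmetrically.\<close>
definition periodized_gauss :: "real \<Rightarrow> real \<Rightarrow> real" where
  "periodized_gauss s x = gauss s x + (\<Sum>n. gauss_pair s n x)"

lemma gauss_nonneg: "gauss s y \<ge> 0"
  by (simp add: gauss_def)

lemma gauss_cos_integrable: "gauss_cos s m integrable_on {a..b}"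
  unfolding gauss_cos_def gauss_def by (intro integrable_continuous_interval continuous_intros)

lemma integral_gauss_pair_cos:
  "integral cell (\<lambda>x. gauss_pair s n x * cos (2 * pi * m * x)) =
   integral {real (Suc n) - 1/2..real (Suc n) + 1/2} (gauss_cos s m)
   + integral {- real (Suc n) - 1/2..- real (Suc n) + 1/2} (gauss_cos s m)"
proof -
  have "integral cell (\<lambda>x. gauss_pair s n x * cos (2 * pi * m * x)) =
      integral cell (\<lambda>x. gauss s (x + real (Suc n)) * cos (2 * pi * m * x))
      + integral cell (\<lambda>x. gauss s (x + - real (Suc n)) * cos (2 * pi * m * x))"
    unfolding gauss_pair_def distrib_right diff_conv_add_uminus
    by (intro integral_add) (auto simp: gauss_def intro!: integrable_continuous_interval continuous_intros)
  then show ?thesis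
    using integral_cell_shift_mult_cos[of "gauss s" "int (Suc n)" m]
      integral_cell_shift_mult_cos[of "gauss s" "- int (Suc n)" m]
    by (simp only: of_int_of_nat_eq of_int_minus gauss_cos_def[abs_def])
qed

lemma integral_gauss_cos_partial_sum:
  "integral cell (gauss_cos s m) + (\<Sum>n<N. integral cell (\<lambda>x. gauss_pair s n x * cos (2 * pi * m * x))) =
   integral {-(real N + 1/2)..real N + 1/2} (gauss_cos s m)"
proof (induction N)
  case (Suc N)
  let ?a = "real N + 1/2" and ?b = "real (Suc N) + 1/2"
  have "real (Suc N) - 1/2 = ?a" "- real (Suc N) + 1/2 = - ?a" "- real (Suc N) - 1/2 = - ?b"
    by simp_all
  note pair = integral_gauss_pair_cos[of s N m, unfolded this]
  have "integral {-?b..?b} (gauss_cos s m) = integral {-?b..-?a} (gauss_cos s m) + integral {-?a..?b} (gauss_cos s m)"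
    by (rule Henstock_Kurzweil_Integration.integral_combine[symmetric]) (auto intro: gauss_cos_integrable)
  also have "integral {-?a..?b} (gauss_cos s m) = integral {-?a..?a} (gauss_cos s m) + integral {?a..?b} (gauss_cos s m)"
    by (rule Henstock_Kurzweil_Integration.integral_combine[symmetric]) (auto intro: gauss_cos_integrable)
  finally have "integral {-?b..?b} (gauss_cos s m)
      = integral {-?b..-?a} (gauss_cos s m) + (integral {-?a..?a} (gauss_cos s m) + integral {?a..?b} (gauss_cos s m))" .
  then show ?case
    unfolding sum.lessThan_Suc using Suc.IH pair by linarith
qed simp

lemma cell_shift_square_ge:
  fixes x :: real
  assumes x: "x \<in> cell"
  shows "real n \<le> (x + Suc n)^2" and "real n \<le> (x - Suc n)^2"
proof -
  have n: "real n \<le> (real n + 1/2)^2"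
    by (simp add: power2_eq_square algebra_simps)
  have "(real n + 1/2)^2 \<le> (x + Suc n)^2"
    using x by (intro power_mono) auto
  with n show "real n \<le> (x + Suc n)^2" by linarith
  have "(real n + 1/2)^2 \<le> (Suc n - x)^2"
    using x by (intro power_mono) auto
  with n show "real n \<le> (x - Suc n)^2" by (simp add: power2_commute)
qed

lemma gauss_le:
  assumes s: "s > 0" and "real n \<le> y^2"
  shows "gauss s y \<le> exp (- pi * s) ^ n"
proof -
  have "pi * s * real n \<le> pi * s * y^2"
    using assms by (intro mult_left_mono) auto
  then have "gauss s y \<le> exp (real n * (- pi * s))"
    unfolding gauss_def by (simp add: algebra_simps)
  also have "\<dots> = exp (- pi * s) ^ n"
    by (rule exp_of_nat_mult)
  finally show ?thesis .
qed

lemma norm_mult_cos_le: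
  assumes "norm (a::real) \<le> B"
  shows "norm (a * cos t) \<le> B"
proof -
  have "\<bar>a\<bar> * \<bar>cos t\<bar> \<le> \<bar>a\<bar> * 1"
    by (intro mult_left_mono) auto
  with assms show ?thesis
    by (simp add: abs_mult)
qed

lemma summable_geometric_exp: "s > 0 \<Longrightarrow> summable (\<lambda>n. 2 * exp (- pi * s) ^ n)"
  by (intro summable_mult summable_geometric) auto

lemma norm_gauss_pair_le:
  assumes s: "s > 0" and x: "x \<in> cell"
  shows "norm (gauss_pair s n x) \<le> 2 * exp (- pi * s) ^ n"
proof -
  have "0 \<le> gauss_pair s n x"
    by (simp add: gauss_pair_def gauss_nonneg)
  moreover have "gauss_pair s n x \<le> 2 * exp (- pi * s) ^ n"
    using gauss_le[OF s cell_shift_square_ge(1)[OF x, of n]] gauss_le[OF s cell_shift_square_ge(2)[OF x, of n]]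
    unfolding gauss_pair_def by linarith
  ultimately show ?thesis
    by simp
qed

lemma summable_gauss_pair: "s > 0 \<Longrightarrow> x \<in> cell \<Longrightarrow> summable (\<lambda>n. gauss_pair s n x)"
  by (rule summable_comparison_test'[OF summable_geometric_exp norm_gauss_pair_le])

text \<open>Termwise integration moves the periodization onto the real line: the cosine coefficients of
  the periodized Gaussian are the values of the Fourier transform of the Gaussian at integers.\<close>
lemma periodized_gauss_cos_coefficient:
  fixes m :: nat
  assumes s: "s > 0"
  shows "((\<lambda>x. periodized_gauss s x * cos (2 * pi * m * x)) has_integral exp (- pi * m^2 / s) / sqrt s) cell"
proof -
  define \<gamma> where "\<gamma> = exp (- pi * m^2 / s) / sqrt s"
  define c where "c n = integral cell (\<lambda>x. gauss_pair s n x * cos (2 * pi * m * x))" for n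
  have "integrable lborel (gauss_cos s m)" "(\<integral>x. gauss_cos s m x \<partial>lborel) = \<gamma>"
    using gaussian_cos_integral[OF s, of m] by (simp_all add: gauss_cos_def[abs_def] gauss_def \<gamma>_def)
  then have "(\<lambda>N. integral {-(real N + 1/2)..real N + 1/2} (gauss_cos s m)) \<longlonglongrightarrow> \<gamma>"
    using tendsto_integral_symmetric by metis
  then have "(\<lambda>N. integral cell (gauss_cos s m) + (\<Sum>n<N. c n))
      \<longlonglongrightarrow> integral cell (gauss_cos s m) + (\<gamma> - integral cell (gauss_cos s m))"
    by (simp add: c_def integral_gauss_cos_partial_sum)
  then have partial_sums: "(\<lambda>N. \<Sum>n<N. c n) \<longlonglongrightarrow> \<gamma> - integral cell (gauss_cos s m)"
    by (rule tendsto_add_const_iff[THEN iffD1])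
  have "((\<lambda>x. \<Sum>n. gauss_pair s n x * cos (2 * pi * m * x)) has_integral \<gamma> - integral cell (gauss_cos s m)) cell"
  proof (rule has_integral_suminf)
    show "continuous_on cell (\<lambda>x. gauss_pair s n x * cos (2 * pi * m * x))" for n
      unfolding gauss_pair_def gauss_def by (intro continuous_intros)
    show "norm (gauss_pair s n x * cos (2 * pi * m * x)) \<le> 2 * exp (- pi * s) ^ n" if "x \<in> cell" for n x
      using that by (intro norm_mult_cos_le norm_gauss_pair_le s)
    show "((\<lambda>x. gauss_pair s n x * cos (2 * pi * m * x)) has_integral c n) cell" for n
      unfolding c_def gauss_pair_def gauss_def
      by (intro integrable_integral integrable_continuous_interval continuous_intros)
    show "summable (\<lambda>n. 2 * exp (- pi * s) ^ n)"
      using s by (rule summable_geometric_exp)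
  qed (fact partial_sums)
  then have "((\<lambda>x. gauss_cos s m x + (\<Sum>n. gauss_pair s n x * cos (2 * pi * m * x))) has_integral
      integral cell (gauss_cos s m) + (\<gamma> - integral cell (gauss_cos s m))) cell"
    by (intro has_integral_add integrable_integral gauss_cos_integrable)
  then have int: "((\<lambda>x. gauss_cos s m x + (\<Sum>n. gauss_pair s n x * cos (2 * pi * m * x))) has_integral \<gamma>) cell"
    by simp
  have "gauss_cos s m x + (\<Sum>n. gauss_pair s n x * cos (2 * pi * m * x))
      = periodized_gauss s x * cos (2 * pi * m * x)" if "x \<in> cell" for x
    using summable_gauss_pair[OF s that]
    by (simp add: periodized_gauss_def gauss_cos_def suminf_mult2 distrib_right)
  then show ?thesis
    unfolding \<gamma>_def[symmetric] using int by (rule has_integral_eq)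
qed

definition gauss_fourier_term :: "real \<Rightarrow> nat \<Rightarrow> real \<Rightarrow> real" where
  "gauss_fourier_term s n x = 2 * gauss (1/s) (Suc n) * cos (2 * pi * Suc n * x)"

definition gauss_fourier_series :: "real \<Rightarrow> real \<Rightarrow> real" where
  "gauss_fourier_series s x = (1 + (\<Sum>n. gauss_fourier_term s n x)) / sqrt s"

lemma norm_gauss_fourier_term_le:
  assumes s: "s > 0"
  shows "norm (gauss_fourier_term s n x) \<le> 2 * exp (- pi * (1/s)) ^ n"
proof -
  have "real (Suc n) \<le> real (Suc n)^2"
    by (simp add: power2_eq_square)
  then have "real n \<le> real (Suc n)^2"
    by linarith
  then have "gauss (1/s) (Suc n) \<le> exp (- pi * (1/s)) ^ n"
    using s by (intro gauss_le) auto
  then show ?thesis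
    unfolding gauss_fourier_term_def
    by (intro norm_mult_cos_le) (simp add: gauss_def)
qed

lemma summable_gauss_fourier_term: "s > 0 \<Longrightarrow> summable (\<lambda>n. gauss_fourier_term s n x)"
  by (rule summable_comparison_test'[OF summable_geometric_exp norm_gauss_fourier_term_le]) simp_all

lemma has_integral_gauss_fourier_term_cos:
  fixes m :: nat
  shows "((\<lambda>x. gauss_fourier_term s n x * cos (2 * pi * m * x)) has_integral
           (if Suc n = m then gauss (1/s) m else 0)) cell"
  using has_integral_cmult_real[OF has_integral_cos_mult_cos[of "Suc n" m], of "2 * gauss (1/s) (Suc n)"]
  by (auto simp: gauss_fourier_term_def algebra_simps)

lemma gauss_fourier_series_cos_coefficient:
  fixes m :: nat
  assumes s: "s > 0"
  shows "((\<lambda>x. gauss_fourier_series s x * cos (2 * pi * m * x)) has_integral exp (- pi * m^2 / s) / sqrt s) cell"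
proof -
  define c where "c n = (if Suc n = m then gauss (1/s) m else 0)" for n
  have partial_sums: "(\<lambda>N. \<Sum>n<N. c n) \<longlonglongrightarrow> (if m = 0 then 0 else gauss (1/s) m)"
  proof (cases m)
    case (Suc k)
    have "\<forall>N\<ge>m. (\<Sum>n<N. c n) = gauss (1/s) m"
      unfolding c_def Suc by (simp add: sum.delta)
    then show ?thesis
      using Suc by (intro tendsto_eventually) (auto simp: eventually_sequentially)
  qed (simp add: c_def)
  have "((\<lambda>x. \<Sum>n. gauss_fourier_term s n x * cos (2 * pi * m * x)) has_integral
      (if m = 0 then 0 else gauss (1/s) m)) cell"
  proof (rule has_integral_suminf)
    show "continuous_on cell (\<lambda>x. gauss_fourier_term s n x * cos (2 * pi * m * x))" for n
      unfolding gauss_fourier_term_def by (intro continuous_intros)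
    show "norm (gauss_fourier_term s n x * cos (2 * pi * m * x)) \<le> 2 * exp (- pi * (1/s)) ^ n" for n x
      by (intro norm_mult_cos_le norm_gauss_fourier_term_le s)
    show "((\<lambda>x. gauss_fourier_term s n x * cos (2 * pi * m * x)) has_integral c n) cell" for n
      unfolding c_def by (rule has_integral_gauss_fourier_term_cos)
    show "summable (\<lambda>n. 2 * exp (- pi * (1/s)) ^ n)"
      using s by (intro summable_geometric_exp) simp
  qed (fact partial_sums)
  moreover have "((\<lambda>x. cos (2 * pi * 0 * x) * cos (2 * pi * m * x)) has_integral (if m = 0 then 1 else 0)) cell"
    using has_integral_cos_mult_cos[of 0 m] by (simp split: if_splits)
  ultimately have "((\<lambda>x. (cos (2 * pi * 0 * x) * cos (2 * pi * m * x)
        + (\<Sum>n. gauss_fourier_term s n x * cos (2 * pi * m * x))) / sqrt s)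
      has_integral ((if m = 0 then 1 else 0) + (if m = 0 then 0 else gauss (1/s) m)) / sqrt s) cell"
    by (intro has_integral_divide has_integral_add)
  moreover have "(if m = 0 then 1 else 0) + (if m = 0 then 0 else gauss (1/s) m) = exp (- pi * m^2 / s)"
    by (simp add: gauss_def)
  ultimately have int: "((\<lambda>x. (cos (2 * pi * 0 * x) * cos (2 * pi * m * x)
        + (\<Sum>n. gauss_fourier_term s n x * cos (2 * pi * m * x))) / sqrt s)
      has_integral exp (- pi * m^2 / s) / sqrt s) cell"
    by simp
  have "(cos (2 * pi * 0 * x) * cos (2 * pi * m * x)
        + (\<Sum>n. gauss_fourier_term s n x * cos (2 * pi * m * x))) / sqrt s
      = gauss_fourier_series s x * cos (2 * pi * m * x)" for x
    using summable_gauss_fourier_term[OF s, of x]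
    by (simp add: gauss_fourier_series_def suminf_mult2 distrib_right)
  then show ?thesis
    using int by (rule has_integral_eq)
qed

lemma continuous_on_suminf:
  fixes f :: "nat \<Rightarrow> 'a::topological_space \<Rightarrow> real"
  assumes cont: "\<And>n. continuous_on S (f n)"
    and bound: "\<And>n x. x \<in> S \<Longrightarrow> norm (f n x) \<le> M n" and M: "summable M"
  shows "continuous_on S (\<lambda>x. \<Sum>n. f n x)"
proof (rule uniform_limit_theorem)
  show "uniform_limit S (\<lambda>N x. \<Sum>n<N. f n x) (\<lambda>x. \<Sum>n. f n x) sequentially"
    by (rule Weierstrass_m_test) (use bound M in auto)
qed (auto intro!: always_eventually continuous_on_sum cont)

lemma continuous_on_periodized_gauss: "s > 0 \<Longrightarrow> continuous_on cell (periodized_gauss s)"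
  unfolding periodized_gauss_def[abs_def]
  by (intro continuous_intros continuous_on_suminf[OF _ norm_gauss_pair_le summable_geometric_exp])
    (auto simp: gauss_pair_def gauss_def intro!: continuous_intros)

lemma continuous_on_gauss_fourier_series: "s > 0 \<Longrightarrow> continuous_on cell (gauss_fourier_series s)"
  unfolding gauss_fourier_series_def[abs_def]
  by (intro continuous_intros continuous_on_suminf[OF _ norm_gauss_fourier_term_le summable_geometric_exp])
    (auto simp: gauss_fourier_term_def intro!: continuous_intros)

lemma periodized_gauss_minus: "periodized_gauss s (-x) = periodized_gauss s x"
proof -
  have "gauss_pair s n (-x) = gauss_pair s n x" for n
    unfolding gauss_pair_def gauss_def by (simp add: power2_eq_square algebra_simps)
  then show ?thesis
    by (simp add: periodized_gauss_def gauss_def)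
qed

lemma gauss_fourier_series_minus: "gauss_fourier_series s (-x) = gauss_fourier_series s x"
  by (simp add: gauss_fourier_series_def gauss_fourier_term_def)

theorem periodized_gauss_eq_gauss_fourier_series:
  assumes s: "s > 0" and x: "x \<in> cell"
  shows "periodized_gauss s x = gauss_fourier_series s x"
proof -
  define H where "H x = periodized_gauss s x - gauss_fourier_series s x" for x
  have "H x = 0"
  proof (rule cos_coefficients_zero_imp_zero[OF _ _ _ x])
    show "continuous_on cell H"
      unfolding H_def[abs_def]
      by (intro continuous_intros continuous_on_periodized_gauss continuous_on_gauss_fourier_series s)
    show "H (-y) = H y" for y
      by (simp add: H_def periodized_gauss_minus gauss_fourier_series_minus)
    show "integral cell (\<lambda>x. H x * cos (2 * pi * m * x)) = 0" for m :: nat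
    proof -
      have "((\<lambda>x. H x * cos (2 * pi * m * x)) has_integral 0) cell"
        using has_integral_diff[OF periodized_gauss_cos_coefficient[OF s, of m]
            gauss_fourier_series_cos_coefficient[OF s, of m]]
        by (simp add: H_def left_diff_distrib)
      then show ?thesis
        by (rule integral_unique)
    qed
  qed
  then show ?thesis
    by (simp add: H_def)
qed

theorem theta3_inversion:
  assumes s: "s > 0"
  shows "theta3 s = theta3 (1/s) / sqrt s"
proof -
  have "gauss_pair s n 0 = 2 * theta_moment_term 0 s n" for n
    by (simp add: gauss_pair_def gauss_def theta_moment_term_def power2_eq_square algebra_simps)
  then have lhs: "periodized_gauss s 0 = theta3 s"
    using summable_theta_moment_term[OF s, of 0]
    by (simp add: periodized_gauss_def gauss_def theta_moment_def suminf_mult theta3_eq_theta_moment[OF s])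
  have "gauss_fourier_term s n 0 = 2 * theta_moment_term 0 (1/s) n" for n
    by (simp add: gauss_fourier_term_def gauss_def theta_moment_term_def)
  then have rhs: "gauss_fourier_series s 0 = theta3 (1/s) / sqrt s"
    using summable_theta_moment_term[of "1/s" 0] s
    by (simp add: gauss_fourier_series_def theta_moment_def suminf_mult theta3_eq_theta_moment)
  show ?thesis
    using periodized_gauss_eq_gauss_fourier_series[OF s, of 0] unfolding lhs rhs by simp
qed

section \<open>Positivity of the log-log convexity of \<open>theta3\<close>\<close>

lemma exp_neg_pi_le: "exp (- pi) \<le> 1/8"
proof -
  have "1 + pi + pi^2/2 \<le> exp pi"
    by (rule exp_lower_Taylor_quadratic) simp
  moreover have "3^2 \<le> pi^2"
    using pi_gt3 by (intro power_mono) auto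
  ultimately show ?thesis
    using pi_gt3 by (simp add: exp_minus field_simps)
qed

lemma Suc_square_le_four_power: "real (Suc n)^2 \<le> 4^n"
proof (induction n)
  case (Suc n)
  have "real (Suc (Suc n))^2 \<le> 4 * real (Suc n)^2"
    by (simp add: power2_eq_square algebra_simps)
  also have "\<dots> \<le> 4 * 4^n"
    using Suc by simp
  finally show ?case by simp
qed simp

lemma exp_neg_pi_square_le:
  assumes x: "x \<ge> 1"
  shows "exp (- pi * real (Suc n)^2 * x) \<le> exp (- pi) ^ Suc n"
proof -
  have "real (Suc n) \<le> real (Suc n)^2"
    by (simp add: power2_eq_square)
  also have "\<dots> \<le> real (Suc n)^2 * x"
    using x by (simp add: mult_le_cancel_left1)
  finally have "pi * real (Suc n) \<le> pi * (real (Suc n)^2 * x)"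
    by (rule mult_left_mono) simp
  then have "- pi * real (Suc n)^2 * x \<le> real (Suc n) * (- pi)"
    by (simp add: algebra_simps)
  then have "exp (- pi * real (Suc n)^2 * x) \<le> exp (real (Suc n) * (- pi))"
    by simp
  also have "\<dots> = exp (- pi) ^ Suc n"
    by (rule exp_of_nat_mult)
  finally show ?thesis .
qed

lemma theta_moment_pos: "x > 0 \<Longrightarrow> theta_moment j x > 0"
  unfolding theta_moment_def
  by (rule suminf_pos) (auto simp: summable_theta_moment_term theta_moment_term_def)

lemma theta_moment_1_le_2: "x > 0 \<Longrightarrow> theta_moment 1 x \<le> theta_moment 2 x"
  unfolding theta_moment_def
proof (rule suminf_le)
  show "theta_moment_term 1 x n \<le> theta_moment_term 2 x n" for n
  proof -
    have "real (Suc n)^2 \<le> real (Suc n)^4"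
      by (rule power_increasing) auto
    then show ?thesis
      unfolding theta_moment_term_def by (intro mult_right_mono) auto
  qed
qed (auto simp: summable_theta_moment_term)

lemma theta_moment_0_le:
  assumes x: "x \<ge> 1"
  shows "theta_moment 0 x \<le> 1/7"
proof -
  let ?q = "exp (- pi)"
  have q: "0 < ?q" "?q \<le> 1/8"
    using exp_neg_pi_le by auto
  have sums: "(\<lambda>n. ?q * ?q^n) sums (?q * (1 / (1 - ?q)))"
    using q by (intro sums_mult geometric_sums) auto
  have "theta_moment 0 x \<le> (\<Sum>n. ?q * ?q^n)"
    unfolding theta_moment_def
    by (intro suminf_le)
      (use exp_neg_pi_square_le[OF x] summable_theta_moment_term[of x 0] x sums
        in \<open>auto simp: theta_moment_term_def sums_iff\<close>)
  also have "\<dots> = ?q / (1 - ?q)"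
    using sums by (simp add: sums_iff)
  also have "\<dots> \<le> 1/7"
    using q by (simp add: field_simps)
  finally show ?thesis .
qed

lemma theta_moment_1_le:
  assumes x: "x \<ge> 1"
  shows "theta_moment 1 x \<le> 1/4"
proof -
  let ?q = "exp (- pi)"
  have q: "0 < ?q" "?q \<le> 1/8"
    using exp_neg_pi_le by auto
  have sums: "(\<lambda>n. ?q * (4 * ?q)^n) sums (?q * (1 / (1 - 4 * ?q)))"
    using q by (intro sums_mult geometric_sums) auto
  have "theta_moment_term 1 x n \<le> ?q * (4 * ?q)^n" for n
  proof -
    have "theta_moment_term 1 x n \<le> 4^n * ?q ^ Suc n"
      unfolding theta_moment_term_def
      using Suc_square_le_four_power[of n] exp_neg_pi_square_le[OF x, of n]
      by (auto intro!: mult_mono)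
    also have "\<dots> = ?q * (4 * ?q)^n"
      by (simp add: power_mult_distrib)
    finally show ?thesis .
  qed
  then have "theta_moment 1 x \<le> (\<Sum>n. ?q * (4 * ?q)^n)"
    unfolding theta_moment_def
    by (intro suminf_le) (use summable_theta_moment_term[of x 1] x sums in \<open>auto simp: sums_iff\<close>)
  also have "\<dots> = ?q / (1 - 4 * ?q)"
    using sums by (simp add: sums_iff)
  also have "\<dots> \<le> 1/4"
    using q by (simp add: field_simps)
  finally show ?thesis .
qed

lemma loglog_convexity_theta3_pos_ge_1:
  assumes x: "x \<ge> 1"
  shows "loglog_convexity theta3 x > 0"
proof -
  have x0: "x > 0" using x by simp
  define a b c where "a = theta_moment 0 x" and "b = theta_moment 1 x" and "c = theta_moment 2 x"
  have a: "0 \<le> a" "a \<le> 1/7"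
    using theta_moment_pos[OF x0] theta_moment_0_le[OF x] by (auto simp: a_def less_imp_le)
  have b: "0 < b" "b \<le> 1/4"
    using theta_moment_pos[OF x0] theta_moment_1_le[OF x] by (auto simp: b_def)
  have bc: "b \<le> c"
    using theta_moment_1_le_2[OF x0] by (simp add: b_def c_def)
  have T: "loglog_convexity theta3 x
      = x * (2 * pi^2 * c * (1 + 2 * a) - 4 * pi^2 * b^2) - 2 * pi * b * (1 + 2 * a)"
    unfolding loglog_convexity_def theta3_eq_theta_moment[OF x0] deriv_theta3[OF x0]
      deriv2_theta3[OF x0] a_def b_def c_def
    by (simp add: power2_eq_square algebra_simps)
  have "4 * b^2 \<le> b"
    using b by (simp add: power2_eq_square mult_left_mono)
  then have "4 * (pi^2 * b^2) \<le> pi^2 * b"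
    using mult_left_mono[of "4 * b^2" b "pi^2"] by (simp add: algebra_simps)
  moreover have "0 \<le> pi^2 * c * a"
    using a b bc by simp
  moreover have "pi^2 * b \<le> pi^2 * c"
    using bc by (simp add: mult_left_mono)
  moreover have "2 * pi^2 * c * (1 + 2 * a) - 4 * pi^2 * b^2
      = 2 * (pi^2 * c) + 4 * (pi^2 * c * a) - 4 * (pi^2 * b^2)"
    by (simp add: algebra_simps)
  ultimately have K: "pi^2 * b \<le> 2 * pi^2 * c * (1 + 2 * a) - 4 * pi^2 * b^2"
    by linarith
  have "1 * (pi^2 * b) \<le> x * (2 * pi^2 * c * (1 + 2 * a) - 4 * pi^2 * b^2)"
    using K x b by (intro mult_mono) auto
  moreover have "2 * pi * b * (1 + 2 * a) \<le> 2 * pi * b * (9/7)"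
    using a b by (intro mult_left_mono) auto
  moreover have "2 * pi * b * (9/7) < pi^2 * b"
  proof -
    have "pi * b * (18/7) < pi * b * pi"
      using pi_gt3 b by (intro mult_strict_left_mono) auto
    then show ?thesis by (simp add: power2_eq_square algebra_simps)
  qed
  ultimately show ?thesis
    unfolding T by linarith
qed

lemma loglog_convexity_theta3_pos:
  assumes s: "s > 0"
  shows "loglog_convexity theta3 s > 0"
proof (cases "s \<ge> 1")
  case True
  then show ?thesis by (rule loglog_convexity_theta3_pos_ge_1)
next
  case False
  have "loglog_convexity theta3 (1/s) > 0"
    using s False by (intro loglog_convexity_theta3_pos_ge_1) (simp add: field_simps)
  moreover have "loglog_convexity theta3 s = loglog_convexity theta3 (1/s) / s^3"
  proof (rule loglog_convexity_inversion[OF _ _ theta3_inversion s])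
    show "(theta3 has_real_derivative deriv theta3 y) (at y)" if "y > 0" for y
      using theta3_has_real_derivative[OF that] deriv_theta3[OF that] by simp
    show "(deriv theta3 has_real_derivative deriv (deriv theta3) y) (at y)" if "y > 0" for y
      using deriv_theta3_has_real_derivative[OF that] deriv2_theta3[OF that] by simp
  qed
  ultimately show ?thesis
    using s by simp
qed

theorem theorem3:
  fixes s :: real
  assumes "s > 0"
  shows "deriv (deriv theta3) s * theta3 s - (deriv theta3 s)^2
           > - (deriv theta3 s * theta3 s) / s
       \<and> - (deriv theta3 s * theta3 s) / s > 0"
proof -
  have s: "s > 0" by fact
  have "deriv theta3 s * theta3 s < 0"
    using s theta_moment_pos[OF s, of 0] theta_moment_pos[OF s, of 1]
    by (simp add: deriv_theta3 theta3_eq_theta_moment mult_neg_pos)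
  then have pos: "- (deriv theta3 s * theta3 s) / s > 0"
    using s by (simp add: divide_neg_pos)
  have "s * (deriv (deriv theta3) s * theta3 s - (deriv theta3 s)^2) > - (deriv theta3 s * theta3 s)"
    using loglog_convexity_theta3_pos[OF s] unfolding loglog_convexity_def by simp
  then show ?thesis
    using s pos by (simp add: field_simps)
qed

end
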